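(* For all positive integers $n,m$, \[s\text{-}sat(Q_n,Q_m)<\Big(m^2+\frac{m}{2}\Big)2^n.\]
   Context: $Q_n$ is the hypercube on $\{0,1\}^n$ with edges between vertices differing in exactly one coordinate. A copy of $F$ is a subgraph isomorphic to $F$. A graph $G$ is $(Q_n,F)$-semi-saturated if $G$ is a subgraph of $Q_n$ and adding any edge of $E(Q_n)\setminus E(G)$ increases the number of copies of $F$. $s\text{-}sat(Q_n,F)$ is the minimum number of edges of a $(Q_n,F)$-semi-saturated graph. *)

theory Defs
  imports Complex_Main
begin

text \<open>Vertices of Q_n: subsets of {..<n} (characteristic sets of 0/1 vectors).
  Two vertices are adjacent iff they differ in exactly one coordinate.
  Edges are 2-element sets of vertices.\<close>

definition qverts :: "nat \<Rightarrow> nat set set" where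
  "qverts n = Pow {..<n}"

definition qadj :: "nat set \<Rightarrow> nat set \<Rightarrow> bool" where
  "qadj u v \<longleftrightarrow> card ((u - v) \<union> (v - u)) = 1"

definition qedges :: "nat \<Rightarrow> nat set set set" where
  "qedges n = {{u, v} | u v. u \<in> qverts n \<and> v \<in> qverts n \<and> qadj u v}"

definition cube_copies :: "nat \<Rightarrow> nat \<Rightarrow> nat set set set \<Rightarrow> (nat set set \<times> nat set set set) set" where
  "cube_copies n m G = {(V, E). V \<subseteq> qverts n \<and> E \<subseteq> G \<and> (\<forall>e\<in>E. e \<subseteq> V) \<and>
      (\<exists>f. bij_betw f (qverts m) V \<and>
           (\<forall>u\<in>qverts m. \<forall>v\<in>qverts m. ({f u, f v} \<in> E \<longleftrightarrow> qadj u v)))}"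

definition semi_saturated :: "nat \<Rightarrow> nat \<Rightarrow> nat set set set \<Rightarrow> bool" where
  "semi_saturated n m G \<longleftrightarrow> G \<subseteq> qedges n \<and>
     (\<forall>e \<in> qedges n - G. card (cube_copies n m G) < card (cube_copies n m (insert e G)))"

definition s_sat :: "nat \<Rightarrow> nat \<Rightarrow> nat" where
  "s_sat n m = (LEAST k. \<exists>G. semi_saturated n m G \<and> card G = k)"

end

theory Submission
  imports "HOL-Library.Nat_Bijection" Defs
begin

(* The whole cube Q_n is trivially semi-saturated (no edge is missing) and has at most n 2^n
   edges; this settles the case n < m.

   If m <= n, choose r >= 1 with m (2^r - 1) <= n < m 2^(r+1) and put q = 2^r - 1.  The
   coordinates are grouped into m disjoint blocks of size q, and every coordinate of a block
   carries a distinct nonempty label in Pow {..<r}.  The syndrome of a vertex y on block i is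
   the symmetric sum of the labels of the coordinates of y in that block (a Hamming code).
   Every syndrome can be cancelled by flipping one coordinate of the block, and exactly a
   2^-r fraction of all vertices has vanishing syndrome.  The graph consists of
     - star edges: all block-i edges at vertices with zero block-i syndrome, and
     - hub edges: all j-edges at vertices with zero syndrome on a block other than the home
       block of j.
   A missing edge {x, x + e_j} extends to a copy of Q_m spanned by j and by one "repairing"
   coordinate in each other block, so adding it creates a new copy.  Counting the edges gives
   |G| 2^r <= m q 2^n + n (m - 1) 2^(n-1), which yields the bound. *)

abbreviation symdiff :: "'a set \<Rightarrow> 'a set \<Rightarrow> 'a set" (infixl "\<triangle>" 65) where
  "A \<triangle> B \<equiv> (A - B) \<union> (B - A)"

subsection \<open>The hypercube and its copies of subcubes\<close>

lemma finite_qverts: "finite (qverts n)"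
  unfolding qverts_def by simp

lemma finite_qedges: "finite (qedges n)"
proof -
  have "qedges n \<subseteq> Pow (qverts n)"
    unfolding qedges_def by auto
  then show ?thesis
    using finite_qverts by (meson finite_Pow_iff rev_finite_subset)
qed

lemma qedge_form:
  assumes "e \<in> qedges n"
  obtains x j where "e = {x, x \<triangle> {j}}" "x \<subseteq> {..<n}" "j < n"
proof -
  obtain x v where e: "e = {x, v}" "x \<subseteq> {..<n}" "v \<subseteq> {..<n}" "qadj x v"
    using assms unfolding qedges_def qverts_def by blast
  then obtain j where j: "x \<triangle> v = {j}"
    unfolding qadj_def by (meson card_1_singletonE)
  then have "v = x \<triangle> {j}" by blast
  moreover have "j < n" using j e by blast
  ultimately show ?thesis using that e by blast
qed

lemma flip_edge_in_qedges:
  assumes "y \<subseteq> {..<n}" "p < n"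
  shows "{y, y \<triangle> {p}} \<in> qedges n"
proof -
  have "y \<triangle> (y \<triangle> {p}) = {p}" by auto
  then have "qadj y (y \<triangle> {p})" unfolding qadj_def by simp
  moreover have "y \<triangle> {p} \<subseteq> {..<n}" using assms by auto
  ultimately show ?thesis using assms unfolding qedges_def qverts_def by blast
qed

text \<open>Q_n has at most n 2^n edges (in fact n 2^(n-1)): each is a vertex with a direction.\<close>

lemma card_qedges_le: "card (qedges n) \<le> n * 2 ^ n"
proof -
  let ?edge = "\<lambda>(y, j). {y, y \<triangle> {j}}"
  have "qedges n \<subseteq> ?edge ` (Pow {..<n} \<times> {..<n})"
    by (auto elim!: qedge_form)
  then have "card (qedges n) \<le> card (?edge ` (Pow {..<n} \<times> {..<n}))"
    by (intro card_mono) auto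
  also have "\<dots> \<le> card (Pow {..<n} \<times> {..<n})" by (rule card_image_le) simp
  also have "\<dots> = n * 2 ^ n" by (simp add: card_cartesian_product card_Pow)
  finally show ?thesis .
qed

lemma finite_cube_copies:
  assumes "G \<subseteq> qedges n"
  shows "finite (cube_copies n m G)"
proof (rule finite_subset)
  show "cube_copies n m G \<subseteq> Pow (qverts n) \<times> Pow G"
    unfolding cube_copies_def by auto
  show "finite (Pow (qverts n) \<times> Pow G)"
    using assms finite_qedges finite_qverts by (meson finite_Pow_iff finite_SigmaI rev_finite_subset)
qed

lemma copy_through_new_edge:
  assumes "e \<in> qedges n" "e \<notin> G" "G \<subseteq> qedges n"
    and "(V, E) \<in> cube_copies n m (insert e G)" "e \<in> E"
  shows "card (cube_copies n m G) < card (cube_copies n m (insert e G))"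
proof (rule psubset_card_mono)
  show "finite (cube_copies n m (insert e G))"
    using assms by (intro finite_cube_copies) auto
  have "cube_copies n m G \<subseteq> cube_copies n m (insert e G)"
    unfolding cube_copies_def by blast
  moreover have "(V, E) \<notin> cube_copies n m G"
    using assms(2,5) unfolding cube_copies_def by auto
  ultimately show "cube_copies n m G \<subset> cube_copies n m (insert e G)"
    using assms(4) by blast
qed

definition subcube_vertex :: "nat set \<Rightarrow> (nat \<Rightarrow> nat) \<Rightarrow> nat set \<Rightarrow> nat set" where
  "subcube_vertex x g A = x \<triangle> g ` A"

definition subcube_edges :: "nat set \<Rightarrow> (nat \<Rightarrow> nat) \<Rightarrow> nat \<Rightarrow> nat set set set" where
  "subcube_edges x g m =
     {{subcube_vertex x g u, subcube_vertex x g v} | u v. u \<in> qverts m \<and> v \<in> qverts m \<and> qadj u v}"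

lemma subcube_vertex_symdiff:
  assumes "inj_on g {..<m}" "A \<subseteq> {..<m}" "B \<subseteq> {..<m}"
  shows "subcube_vertex x g A \<triangle> subcube_vertex x g B = g ` (A \<triangle> B)"
proof -
  have "subcube_vertex x g A \<triangle> subcube_vertex x g B = g ` A \<triangle> g ` B"
    unfolding subcube_vertex_def by blast
  also have "\<dots> = g ` (A \<triangle> B)"
    using assms by (auto simp: inj_on_def)
  finally show ?thesis .
qed

lemma subcube_copy:
  assumes x: "x \<subseteq> {..<n}" and inj: "inj_on g {..<m}" and gn: "g ` {..<m} \<subseteq> {..<n}"
    and EG: "subcube_edges x g m \<subseteq> G"
  shows "(subcube_vertex x g ` qverts m, subcube_edges x g m) \<in> cube_copies n m G"
proof -
  let ?f = "subcube_vertex x g"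
  have adj: "qadj (?f A) (?f B) \<longleftrightarrow> qadj A B" if "A \<in> qverts m" "B \<in> qverts m" for A B
  proof -
    have "inj_on g (A \<triangle> B)"
      using inj that by (auto simp: qverts_def intro: inj_on_subset)
    then show ?thesis
      using subcube_vertex_symdiff[OF inj] that by (simp add: qadj_def card_image qverts_def)
  qed
  have "inj_on ?f (qverts m)"
  proof (rule inj_onI)
    fix A B assume "A \<in> qverts m" "B \<in> qverts m" "?f A = ?f B"
    then have "g ` (A \<triangle> B) = {}"
      using subcube_vertex_symdiff[OF inj, of A B x] by (auto simp: qverts_def)
    then show "A = B" by blast
  qed
  then have bij: "bij_betw ?f (qverts m) (?f ` qverts m)"
    by (simp add: bij_betw_def)
  have edges: "{?f u, ?f v} \<in> subcube_edges x g m \<longleftrightarrow> qadj u v"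
    if "u \<in> qverts m" "v \<in> qverts m" for u v
  proof
    assume "{?f u, ?f v} \<in> subcube_edges x g m"
    then obtain u' v' where uv': "{?f u, ?f v} = {?f u', ?f v'}"
      "u' \<in> qverts m" "v' \<in> qverts m" "qadj u' v'"
      unfolding subcube_edges_def by blast
    then have "?f u \<triangle> ?f v = ?f u' \<triangle> ?f v'"
      by (auto simp: doubleton_eq_iff)
    then have "qadj (?f u) (?f v)"
      using adj uv' unfolding qadj_def by simp
    then show "qadj u v" using adj that by blast
  qed (use that in \<open>auto simp: subcube_edges_def\<close>)
  have vertices: "?f ` qverts m \<subseteq> qverts n"
    using x gn by (auto simp: subcube_vertex_def qverts_def)
  show ?thesis
    unfolding cube_copies_def mem_Collect_eq prod.case
  proof (intro conjI exI[of _ ?f] ballI)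
    fix e assume "e \<in> subcube_edges x g m"
    then show "e \<subseteq> ?f ` qverts m" unfolding subcube_edges_def by auto
  next
    fix u v assume "u \<in> qverts m" "v \<in> qverts m"
    then show "{?f u, ?f v} \<in> subcube_edges x g m \<longleftrightarrow> qadj u v" by (rule edges)
  qed (use vertices EG bij in auto)
qed

lemma subcube_edge_form:
  assumes inj: "inj_on g {..<m}" and ed: "ed \<in> subcube_edges x g m"
  obtains A i where "A \<subseteq> {..<m}" "i \<in> A"
    "ed = {subcube_vertex x g A, subcube_vertex x g A \<triangle> {g i}}"
proof -
  obtain u v where uv: "ed = {subcube_vertex x g u, subcube_vertex x g v}"
    "u \<subseteq> {..<m}" "v \<subseteq> {..<m}" "qadj u v"
    using ed unfolding subcube_edges_def qverts_def by blast
  then obtain i where i: "u \<triangle> v = {i}"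
    unfolding qadj_def by (meson card_1_singletonE)
  have flip: "subcube_vertex x g v = subcube_vertex x g u \<triangle> {g i}"
    using subcube_vertex_symdiff[OF inj uv(2,3)] i by auto
  show ?thesis
  proof (cases "i \<in> u")
    case True
    then show ?thesis using that uv flip by blast
  next
    case False
    then have "i \<in> v" using i by blast
    moreover have "ed = {subcube_vertex x g v, subcube_vertex x g v \<triangle> {g i}}"
      using uv(1) flip by auto
    ultimately show ?thesis using that uv by blast
  qed
qed

lemma s_sat_le: "semi_saturated n m G \<Longrightarrow> s_sat n m \<le> card G"
  unfolding s_sat_def by (rule Least_le) blast

lemma s_sat_small_le: "s_sat n m \<le> n * 2 ^ n"
proof -
  have "semi_saturated n m (qedges n)"
    unfolding semi_saturated_def by simp
  then show ?thesis using s_sat_le card_qedges_le le_trans by blast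
qed

subsection \<open>A perfect code on a block of coordinates\<close>

lemma odd_card_toggle:
  assumes "finite S"
  shows "odd (card (S \<triangle> {p})) \<longleftrightarrow> even (card S)"
proof (cases "p \<in> S")
  case True
  then have "S \<triangle> {p} = S - {p}" and "card S \<noteq> 0" using assms by auto
  then show ?thesis using True assms by (cases "card S") auto
next
  case False
  then have "S \<triangle> {p} = insert p S" by auto
  then show ?thesis using False assms by simp
qed

lemma set_encode_less: "A \<subseteq> {..<r} \<Longrightarrow> set_encode A < 2 ^ r"
proof (induction r arbitrary: A)
  case 0 then show ?case by simp
next
  case (Suc r)
  have fin: "finite (A - {r})" using Suc.prems finite_subset by blast
  have "A - {r} \<subseteq> {..<r}" using Suc.prems by auto
  then have less: "set_encode (A - {r}) < 2 ^ r" by (rule Suc.IH)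
  show ?case
  proof (cases "r \<in> A")
    case True
    then have "set_encode A = set_encode (insert r (A - {r}))" by (simp add: insert_absorb)
    also have "\<dots> = 2 ^ r + set_encode (A - {r})"
      by (rule set_encode_insert) (use fin in auto)
    finally show ?thesis using less by simp
  next
    case False
    then have "set_encode A = set_encode (A - {r})" by simp
    then show ?thesis using less by simp
  qed
qed

text \<open>Coordinates are grouped into consecutive blocks of q = 2^r - 1; the coordinates of a
  block carry the distinct nonempty labels in Pow {..<r}.\<close>

locale hamming_labels =
  fixes r q :: nat
  assumes r_pos: "r \<ge> 1" and q_def: "q = 2 ^ r - 1"
begin

definition block :: "nat \<Rightarrow> nat set" where
  "block i = {i * q..<(i + 1) * q}"

definition label :: "nat \<Rightarrow> nat set" where
  "label p = set_decode (p mod q + 1)"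

definition syndrome :: "nat \<Rightarrow> nat set \<Rightarrow> nat set" where
  "syndrome i y = {b. b < r \<and> odd (card {p \<in> y \<inter> block i. b \<in> label p})}"

definition syndrome_class :: "nat set \<Rightarrow> nat \<Rightarrow> nat set \<Rightarrow> nat set set" where
  "syndrome_class U i \<sigma> = {y \<in> Pow U. syndrome i y = \<sigma>}"

lemma q_pos: "q \<ge> 1"
proof -
  have "(2::nat) ^ 1 \<le> 2 ^ r" using r_pos by (intro power_increasing) auto
  then show ?thesis using q_def by simp
qed

lemma in_block_iff: "p \<in> block i \<longleftrightarrow> p div q = i"
proof -
  have "p \<in> block i \<longleftrightarrow> i * q \<le> p \<and> p < (i + 1) * q" by (simp add: block_def)
  also have "\<dots> \<longleftrightarrow> p div q = i"
  proof
    assume "i * q \<le> p \<and> p < (i + 1) * q"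
    then show "p div q = i" by (intro div_nat_eqI) (auto simp: mult.commute)
  next
    assume "p div q = i"
    moreover have "p div q * q \<le> p" by simp
    moreover have "p < q + p div q * q" using q_pos by (intro dividend_less_div_times) simp
    ultimately show "i * q \<le> p \<and> p < (i + 1) * q" by (simp add: add.commute)
  qed
  finally show ?thesis .
qed

lemma finite_block: "finite (block i)"
  by (simp add: block_def)

lemma card_block: "card (block i) = q"
  by (simp add: block_def)

lemma syndrome_cong: "y \<inter> block i = z \<inter> block i \<Longrightarrow> syndrome i y = syndrome i z"
  unfolding syndrome_def by simp

lemma syndrome_subset: "syndrome i y \<subseteq> {..<r}"
  by (auto simp: syndrome_def)

lemma syndrome_flip:
  assumes p: "p \<in> block i"
  shows "syndrome i (y \<triangle> {p}) = syndrome i y \<triangle> (label p \<inter> {..<r})"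
proof -
  have "odd (card {p' \<in> (y \<triangle> {p}) \<inter> block i. b \<in> label p'}) \<longleftrightarrow>
      (odd (card {p' \<in> y \<inter> block i. b \<in> label p'}) \<longleftrightarrow> b \<notin> label p)" for b
  proof -
    let ?S = "{p' \<in> y \<inter> block i. b \<in> label p'}"
    have "finite ?S" using finite_block by auto
    moreover have "{p' \<in> (y \<triangle> {p}) \<inter> block i. b \<in> label p'} =
        (if b \<in> label p then ?S \<triangle> {p} else ?S)"
      using p by auto
    ultimately show ?thesis using odd_card_toggle by auto
  qed
  then show ?thesis unfolding syndrome_def by auto
qed

lemma label_onto:
  assumes "\<sigma> \<subseteq> {..<r}" "\<sigma> \<noteq> {}"
  obtains p where "p \<in> block i" "label p = \<sigma>"
proof -
  have fin: "finite \<sigma>" using assms finite_subset by blast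
  define k where "k = set_encode \<sigma>"
  have k0: "k \<noteq> 0" using assms fin set_encode_eq[of \<sigma> "{}"] unfolding k_def by simp
  have "k < 2 ^ r" using set_encode_less assms unfolding k_def by blast
  then have "k - 1 < q" using k0 q_def by simp
  then have "(i * q + (k - 1)) mod q = k - 1" "(i * q + (k - 1)) div q = i"
    using q_pos by (simp_all add: add.commute)
  then show ?thesis
    using that[of "i * q + (k - 1)"] k0 fin in_block_iff by (simp add: label_def k_def)
qed

lemma repair_syndrome:
  assumes "syndrome i y \<noteq> {}"
  obtains p where "p \<in> block i" "syndrome i (y \<triangle> {p}) = {}"
proof -
  obtain p where p: "p \<in> block i" "label p = syndrome i y"
    using label_onto[OF syndrome_subset assms] by blast
  then have "label p \<inter> {..<r} = syndrome i y" using syndrome_subset by blast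
  then show ?thesis using that syndrome_flip[OF p(1), of y] p by auto
qed

text \<open>All syndrome classes have equal size: flipping a coordinate labelled \<sigma> maps the
  codewords bijectively onto the class of \<sigma>.\<close>

lemma card_syndrome_class:
  assumes "block i \<subseteq> U" "\<sigma> \<subseteq> {..<r}"
  shows "card (syndrome_class U i \<sigma>) = card (syndrome_class U i {})"
proof (cases "\<sigma> = {}")
  case False
  then obtain p where p: "p \<in> block i" "label p = \<sigma>"
    using label_onto assms(2) by blast
  have "bij_betw (\<lambda>y. y \<triangle> {p}) (syndrome_class U i {}) (syndrome_class U i \<sigma>)"
  proof (rule bij_betw_byWitness[where f' = "\<lambda>y. y \<triangle> {p}"])
    show "(\<lambda>y. y \<triangle> {p}) ` syndrome_class U i {} \<subseteq> syndrome_class U i \<sigma>"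
      "(\<lambda>y. y \<triangle> {p}) ` syndrome_class U i \<sigma> \<subseteq> syndrome_class U i {}"
      using syndrome_flip[OF p(1)] p assms by (auto simp: syndrome_class_def)
  qed auto
  then show ?thesis by (metis bij_betw_same_card)
qed simp

lemma finite_syndrome_class: "finite U \<Longrightarrow> finite (syndrome_class U i \<sigma>)"
  unfolding syndrome_class_def by (rule finite_subset[of _ "Pow U"]) auto

lemma card_zero_syndrome:
  assumes U: "finite U" "block i \<subseteq> U"
  shows "card (syndrome_class U i {}) * 2 ^ r = 2 ^ card U"
proof -
  have PU: "Pow U = (\<Union>\<sigma> \<in> Pow {..<r}. syndrome_class U i \<sigma>)"
    using syndrome_subset by (auto simp: syndrome_class_def)
  have "card (Pow U) = (\<Sum>\<sigma> \<in> Pow {..<r}. card (syndrome_class U i \<sigma>))"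
    unfolding PU
  proof (rule card_UN_disjoint)
    show "\<forall>\<sigma>\<in>Pow {..<r}. finite (syndrome_class U i \<sigma>)"
      using finite_syndrome_class U(1) by blast
    show "\<forall>\<sigma>\<in>Pow {..<r}. \<forall>\<tau>\<in>Pow {..<r}. \<sigma> \<noteq> \<tau> \<longrightarrow>
        syndrome_class U i \<sigma> \<inter> syndrome_class U i \<tau> = {}"
      unfolding syndrome_class_def by blast
  qed simp
  also have "\<dots> = (\<Sum>\<sigma> \<in> Pow {..<r}. card (syndrome_class U i {}))"
    by (intro sum.cong refl card_syndrome_class[OF U(2)]) auto
  finally show ?thesis using U(1) by (simp add: card_Pow mult.commute)
qed

end

subsection \<open>The construction\<close>

text \<open>m blocks fit into the n coordinates; every coordinate j has a home block, its own block
  or the last one for the coordinates beyond all blocks.\<close>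

locale hamming_construction = hamming_labels +
  fixes m n :: nat
  assumes m_pos: "m \<ge> 1" and blocks_fit: "m * q \<le> n"
begin

definition home :: "nat \<Rightarrow> nat" where
  "home j = min (j div q) (m - 1)"

definition star_edges :: "nat \<Rightarrow> nat set set set" where
  "star_edges i = {{y, y \<triangle> {p}} | y p. y \<subseteq> {..<n} \<and> p \<in> block i \<and> syndrome i y = {}}"

definition hub_edges :: "nat \<Rightarrow> nat set set set" where
  "hub_edges j = {{y, y \<triangle> {j}} | y. y \<subseteq> {..<n} \<and> (\<exists>i<m. i \<noteq> home j \<and> syndrome i y = {})}"

definition sat_graph :: "nat set set set" where
  "sat_graph = (\<Union>i<m. star_edges i) \<union> (\<Union>j<n. hub_edges j)"

lemma home_less: "home j < m"
  using m_pos by (simp add: home_def)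

lemma block_subset: "i < m \<Longrightarrow> block i \<subseteq> {..<n}"
proof -
  assume "i < m"
  then have "(i + 1) * q \<le> m * q" by (intro mult_le_mono1) simp
  then show ?thesis using blocks_fit by (auto simp: block_def)
qed

lemma not_in_foreign_block: "i < m \<Longrightarrow> i \<noteq> home j \<Longrightarrow> j \<notin> block i"
  by (auto simp: in_block_iff home_def)

lemma sat_graph_subset: "sat_graph \<subseteq> qedges n"
  using block_subset flip_edge_in_qedges
  unfolding sat_graph_def star_edges_def hub_edges_def by blast

text \<open>Directions repairing x for the missing j-edge at x: j itself for the home block of j,
  and for every other block i a coordinate of block i cancelling the syndrome of x there.\<close>

definition repairing :: "nat set \<Rightarrow> nat \<Rightarrow> (nat \<Rightarrow> nat) \<Rightarrow> bool" where
  "repairing x j g \<longleftrightarrow> g (home j) = j \<and>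
     (\<forall>i<m. i \<noteq> home j \<longrightarrow> g i \<in> block i \<and> syndrome i (x \<triangle> {g i}) = {})"

text \<open>If the j-edge at x is not a hub edge, x has nonzero syndrome on every foreign block,
  so repairing directions exist.\<close>

lemma repairing_exists:
  assumes x: "x \<subseteq> {..<n}" and e: "{x, x \<triangle> {j}} \<notin> hub_edges j"
  obtains g where "repairing x j g"
proof -
  have "\<forall>i<m. i \<noteq> home j \<longrightarrow> (\<exists>p. p \<in> block i \<and> syndrome i (x \<triangle> {p}) = {})"
  proof (intro allI impI)
    fix i assume i: "i < m" "i \<noteq> home j"
    then have "syndrome i x \<noteq> {}" using x e unfolding hub_edges_def by blast
    then show "\<exists>p. p \<in> block i \<and> syndrome i (x \<triangle> {p}) = {}"
      by (meson repair_syndrome)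
  qed
  then obtain d where "\<forall>i<m. i \<noteq> home j \<longrightarrow> d i \<in> block i \<and> syndrome i (x \<triangle> {d i}) = {}"
    by metis
  then have "repairing x j (d(home j := j))"
    unfolding repairing_def by simp
  then show ?thesis using that by blast
qed

lemma repairing_block_iff:
  assumes "repairing x j g" "i < m" "k < m" "k \<noteq> home j"
  shows "g i \<in> block k \<longleftrightarrow> i = k"
  using assms not_in_foreign_block in_block_iff unfolding repairing_def by metis

lemma repairing_inj:
  assumes g: "repairing x j g"
  shows "inj_on g {..<m}"
proof (rule inj_onI)
  fix a b assume ab: "a \<in> {..<m}" "b \<in> {..<m}" "g a = g b"
  show "a = b"
  proof (cases "a = home j")
    case True
    then show ?thesis
      using repairing_block_iff[OF g, of a b] repairing_block_iff[OF g, of b b] ab by auto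
  next
    case False
    then show ?thesis
      using repairing_block_iff[OF g, of a a] repairing_block_iff[OF g, of b a] ab by auto
  qed
qed

lemma repairing_range:
  assumes "repairing x j g" "j < n"
  shows "g ` {..<m} \<subseteq> {..<n}"
  using assms block_subset unfolding repairing_def by fastforce

text \<open>A subcube vertex containing a foreign block index i has zero syndrome on block i: among
  its flipped directions only g i lies in block i.\<close>

lemma repairing_syndrome:
  assumes g: "repairing x j g" and i: "i < m" "i \<noteq> home j" and A: "A \<subseteq> {..<m}" "i \<in> A"
  shows "syndrome i (subcube_vertex x g A) = {}"
proof -
  have "g ` A \<inter> block i = {g i}"
    using repairing_block_iff[OF g _ i] A by auto
  then have "subcube_vertex x g A \<inter> block i = (x \<triangle> {g i}) \<inter> block i"
    unfolding subcube_vertex_def by blast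
  then show ?thesis
    using syndrome_cong g i unfolding repairing_def by metis
qed

lemma repairing_subcube_edges:
  assumes g: "repairing x j g" and x: "x \<subseteq> {..<n}" and j: "j < n"
  shows "subcube_edges x g m \<subseteq> insert {x, x \<triangle> {j}} sat_graph"
proof
  fix ed assume "ed \<in> subcube_edges x g m"
  then obtain A i where A: "A \<subseteq> {..<m}" "i \<in> A"
    and ed: "ed = {subcube_vertex x g A, subcube_vertex x g A \<triangle> {g i}}"
    using subcube_edge_form[OF repairing_inj[OF g]] by blast
  have i: "i < m" using A by blast
  have vertex: "subcube_vertex x g A \<subseteq> {..<n}"
    using x repairing_range[OF g j] A by (auto simp: subcube_vertex_def)
  consider (foreign) "i \<noteq> home j" | (other) k where "i = home j" "k \<in> A" "k \<noteq> home j"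
    | (edge) "A = {home j}" "i = home j"
    using A by blast
  then show "ed \<in> insert {x, x \<triangle> {j}} sat_graph"
  proof cases
    case foreign
    have "g i \<in> block i" using g i foreign unfolding repairing_def by blast
    then have "ed \<in> star_edges i"
      using repairing_syndrome[OF g i foreign A] vertex unfolding ed star_edges_def by blast
    then show ?thesis using i unfolding sat_graph_def by blast
  next
    case other
    have "g i = j" "k < m" using g other A unfolding repairing_def by auto
    then have "ed \<in> hub_edges j"
      using repairing_syndrome[OF g _ other(3) A(1) other(2)] vertex other(3)
      unfolding ed hub_edges_def by blast
    then show ?thesis using j unfolding sat_graph_def by blast
  next
    case edge
    then have "ed = {x \<triangle> {j}, x}"
      using g unfolding ed repairing_def subcube_vertex_def by auto
    then show ?thesis by auto
  qed
qed

theorem sat_graph_semi_saturated: "semi_saturated n m sat_graph"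
  unfolding semi_saturated_def
proof (intro conjI ballI)
  show "sat_graph \<subseteq> qedges n" by (rule sat_graph_subset)
  fix e assume e: "e \<in> qedges n - sat_graph"
  then obtain x j where ex: "e = {x, x \<triangle> {j}}" and x: "x \<subseteq> {..<n}" and j: "j < n"
    using qedge_form by blast
  then have "e \<notin> hub_edges j" using e unfolding sat_graph_def by blast
  then obtain g where g: "repairing x j g"
    using repairing_exists x ex by blast
  have "(subcube_vertex x g ` qverts m, subcube_edges x g m) \<in> cube_copies n m (insert e sat_graph)"
    using subcube_copy[OF x repairing_inj[OF g] repairing_range[OF g j]]
      repairing_subcube_edges[OF g x j] ex by blast
  moreover have "e \<in> subcube_edges x g m"
  proof -
    have "subcube_vertex x g {} = x" "subcube_vertex x g {home j} = x \<triangle> {j}"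
      using g by (auto simp: subcube_vertex_def repairing_def)
    moreover have "qadj {} {home j}" "{} \<in> qverts m" "{home j} \<in> qverts m"
      using home_less by (auto simp: qadj_def qverts_def)
    ultimately show ?thesis unfolding subcube_edges_def ex by blast
  qed
  ultimately show "card (cube_copies n m sat_graph) < card (cube_copies n m (insert e sat_graph))"
    using copy_through_new_edge sat_graph_subset e by blast
qed

subsection \<open>Counting the edges\<close>

text \<open>The star edges of block i are the zero-syndrome vertices times the q directions of the
  block, hence at most q 2^n / 2^r.\<close>

lemma card_star_edges:
  assumes i: "i < m"
  shows "card (star_edges i) * 2 ^ r \<le> q * 2 ^ n"
proof -
  let ?C = "syndrome_class {..<n} i {}"
  have eq: "star_edges i = (\<lambda>(y, p). {y, y \<triangle> {p}}) ` (?C \<times> block i)"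
    unfolding star_edges_def syndrome_class_def by auto
  have "card (star_edges i) \<le> card (?C \<times> block i)"
    unfolding eq by (rule card_image_le) (simp add: finite_syndrome_class finite_block)
  also have "\<dots> = card ?C * q"
    by (simp add: card_cartesian_product card_block)
  finally have "card (star_edges i) * 2 ^ r \<le> card ?C * 2 ^ r * q"
    by (simp add: mult_ac)
  also have "\<dots> = q * 2 ^ n"
    using card_zero_syndrome[of "{..<n}" i] block_subset[OF i] by simp
  finally show ?thesis .
qed

text \<open>A hub edge in direction j is determined by its endpoint without j, which is a codeword
  for one of the m - 1 foreign blocks in the cube on the other n - 1 coordinates.\<close>

lemma card_hub_edges:
  assumes j: "j < n"
  shows "card (hub_edges j) * 2 ^ r \<le> (m - 1) * 2 ^ (n - 1)"
proof -
  define I where "I = {..<m} - {home j}"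
  let ?C = "\<lambda>i. syndrome_class ({..<n} - {j}) i {}"
  have "hub_edges j \<subseteq> (\<Union>i\<in>I. (\<lambda>y. {y, insert j y}) ` ?C i)"
  proof
    fix e assume "e \<in> hub_edges j"
    then obtain y i where e: "e = {y, y \<triangle> {j}}" "y \<subseteq> {..<n}" "i < m" "i \<noteq> home j"
        "syndrome i y = {}"
      unfolding hub_edges_def by blast
    have "syndrome i (y - {j}) = syndrome i y"
      using not_in_foreign_block[OF e(3,4)] by (intro syndrome_cong) auto
    then have "y - {j} \<in> ?C i" using e by (auto simp: syndrome_class_def)
    moreover have "e = {y - {j}, insert j (y - {j})}" using e(1) by auto
    ultimately show "e \<in> (\<Union>i\<in>I. (\<lambda>y. {y, insert j y}) ` ?C i)"
      using e unfolding I_def by blast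
  qed
  then have "card (hub_edges j) \<le> card (\<Union>i\<in>I. (\<lambda>y. {y, insert j y}) ` ?C i)"
    by (intro card_mono) (simp_all add: I_def finite_syndrome_class)
  also have "\<dots> \<le> (\<Sum>i\<in>I. card ((\<lambda>y. {y, insert j y}) ` ?C i))"
    by (rule card_UN_le) (simp add: I_def)
  also have "\<dots> \<le> (\<Sum>i\<in>I. card (?C i))"
    by (intro sum_mono card_image_le) (simp add: finite_syndrome_class)
  finally have "card (hub_edges j) * 2 ^ r \<le> (\<Sum>i\<in>I. card (?C i) * 2 ^ r)"
    unfolding sum_distrib_right[symmetric] by (rule mult_right_mono) simp
  also have "\<dots> = (\<Sum>i\<in>I. 2 ^ (n - 1))"
  proof (rule sum.cong)
    fix i assume "i \<in> I"
    then have "block i \<subseteq> {..<n} - {j}"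
      using block_subset not_in_foreign_block by (auto simp: I_def)
    then show "card (?C i) * 2 ^ r = 2 ^ (n - 1)"
      using card_zero_syndrome[of "{..<n} - {j}" i] j by simp
  qed simp
  also have "\<dots> = (m - 1) * 2 ^ (n - 1)"
    using home_less by (simp add: I_def)
  finally show ?thesis .
qed

lemma card_sat_graph: "card sat_graph * 2 ^ r \<le> m * (q * 2 ^ n) + n * ((m - 1) * 2 ^ (n - 1))"
proof -
  have "card sat_graph \<le> card (\<Union>i<m. star_edges i) + card (\<Union>j<n. hub_edges j)"
    unfolding sat_graph_def by (rule card_Un_le)
  also have "\<dots> \<le> (\<Sum>i<m. card (star_edges i)) + (\<Sum>j<n. card (hub_edges j))"
    by (intro add_mono card_UN_le) auto
  finally have "card sat_graph * 2 ^ r \<le>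
      (\<Sum>i<m. card (star_edges i) * 2 ^ r) + (\<Sum>j<n. card (hub_edges j) * 2 ^ r)"
    unfolding sum_distrib_right[symmetric] distrib_right[symmetric] by (rule mult_right_mono) simp
  also have "\<dots> \<le> (\<Sum>i<m. q * 2 ^ n) + (\<Sum>j<n. (m - 1) * 2 ^ (n - 1))"
    by (intro add_mono sum_mono card_star_edges card_hub_edges) auto
  also have "\<dots> = m * (q * 2 ^ n) + n * ((m - 1) * 2 ^ (n - 1))" by simp
  finally show ?thesis .
qed

end

lemma block_size_exists:
  fixes m n :: nat
  assumes m: "m \<ge> 1" and mn: "m \<le> n"
  obtains r where "r \<ge> 1" "m * (2 ^ r - 1) \<le> n" "n < m * 2 ^ (r + 1)"
proof -
  define P where "P r \<longleftrightarrow> m * (2 ^ r - 1) \<le> n" for r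
  have P1: "P 1" using mn by (simp add: P_def)
  have bound: "y \<le> n" if "P y" for y
  proof -
    have "y \<le> 2 ^ y - 1" using less_exp[of y] by arith
    also have "\<dots> \<le> m * (2 ^ y - 1)" using m by simp
    finally show "y \<le> n" using that by (simp add: P_def)
  qed
  define r where "r = (GREATEST r. P r)"
  have "P r" "1 \<le> r"
    unfolding r_def using P1 bound by (blast intro: GreatestI_nat Greatest_le_nat)+
  moreover have "\<not> P (r + 1)"
    using Greatest_le_nat[of P "r + 1" n] bound unfolding r_def by fastforce
  then have "n < m * 2 ^ (r + 1)"
    by (simp add: P_def) (meson diff_le_self le_less_trans mult_le_mono2 not_le)
  ultimately show ?thesis using that unfolding P_def by blast
qed

text \<open>The edge count of the construction, with C = |G|, R = 2^r, N = 2^n and n < 2 m R,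
  gives C R \<le> m (R - 1) N + m R (m - 1) N < (m^2 + m/2) N R.\<close>

lemma count_bound_real:
  fixes C R N m n :: real
  assumes count: "C * R \<le> m * ((R - 1) * N) + n * ((m - 1) * (N / 2))"
    and n: "n \<le> 2 * m * R" and m: "m \<ge> 1" and R: "R > 0" and N: "N > 0"
  shows "C < (m ^ 2 + m / 2) * N"
proof -
  have "n * ((m - 1) * N) \<le> (2 * m * R) * ((m - 1) * N)"
    using n m N by (intro mult_right_mono) auto
  then have "C * R \<le> m * ((R - 1) * N) + m * R * ((m - 1) * N)"
    using count by simp
  also have "\<dots> = m * m * R * N - m * N" by (simp add: algebra_simps)
  also have "\<dots> < (m ^ 2 + m / 2) * N * R"
  proof -
    have "0 < m * N" "0 \<le> m / 2 * N * R" using m N R by simp_all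
    then show ?thesis by (simp add: algebra_simps power2_eq_square)
  qed
  finally show ?thesis using R by (simp add: mult.assoc mult_less_cancel_right)
qed

lemma s_sat_large_bound:
  fixes n m :: nat
  assumes m: "m \<ge> 1" and mn: "m \<le> n"
  shows "real (s_sat n m) < (real m ^ 2 + real m / 2) * 2 ^ n"
proof -
  obtain r where r: "r \<ge> 1" "m * (2 ^ r - 1) \<le> n" "n < m * 2 ^ (r + 1)"
    using block_size_exists m mn by blast
  interpret hamming_construction r "2 ^ r - 1" m n
    using r m by unfold_locales auto
  have "real (card sat_graph) < (real m ^ 2 + real m / 2) * 2 ^ n"
  proof (rule count_bound_real[where R = "2 ^ r" and n = "real n"])
    have "real (card sat_graph * 2 ^ r) \<le> real (m * ((2 ^ r - 1) * 2 ^ n) + n * ((m - 1) * 2 ^ (n - 1)))"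
      using card_sat_graph q_def by (simp only: of_nat_le_iff)
    moreover have "real (2 ^ r - 1) = real (2 ^ r) - 1" "real (m - 1) = real m - 1"
      using m by (simp_all add: of_nat_diff)
    moreover have "real (2 ^ (n - 1)) = real (2 ^ n) / 2"
      using m mn by (cases n) auto
    ultimately show "real (card sat_graph) * 2 ^ r \<le>
        real m * ((2 ^ r - 1) * 2 ^ n) + real n * ((real m - 1) * (2 ^ n / 2))"
      by (simp only: of_nat_mult of_nat_add) simp
    have "real n < real (m * 2 ^ (r + 1))" using r(3) by (simp only: of_nat_less_iff)
    then show "real n \<le> 2 * real m * 2 ^ r" by simp
  qed (use m in auto)
  moreover have "real (s_sat n m) \<le> real (card sat_graph)"
    using s_sat_le[OF sat_graph_semi_saturated] by (simp only: of_nat_le_iff)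
  ultimately show ?thesis by linarith
qed

theorem theorem2:
  fixes n m :: nat
  assumes "n \<ge> 1" and "m \<ge> 1"
  shows "real (s_sat n m) < (real m ^ 2 + real m / 2) * 2 ^ n"
proof (cases "n < m")
  case True
  have "real (s_sat n m) \<le> real (n * 2 ^ n)"
    using s_sat_small_le by (simp only: of_nat_le_iff)
  also have "\<dots> < real m * 2 ^ n" using True by simp
  also have "\<dots> \<le> (real m ^ 2 + real m / 2) * 2 ^ n"
  proof (rule mult_right_mono)
    have "1 * real m \<le> real m * real m"
      using assms(2) by (intro mult_right_mono) auto
    then show "real m \<le> real m ^ 2 + real m / 2" by (simp add: power2_eq_square)
  qed simp
  finally show ?thesis .
next
  case False
  then show ?thesis using s_sat_large_bound assms(2) by simp
qed

end
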